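(* For $n\ge 2$, $$(\mathfrak C_0+\mathfrak C_0+\mathfrak C_0+\mathfrak C_0+\mathfrak C_0)^n=\binom{2n-1}{4}\mathfrak C_{2n}+\frac{4n^2-16n+17}{3}\binom{2n}{2}\binom{2n-3}{2}\mathfrak C_{2n-2}+\binom{2n}{4}(2n-5)^4\mathfrak C_{2n-4}.$$
   Context: The numbers $\mathfrak C_{2n}$ (Cauchy numbers with level $2$) are defined by $\frac{t}{{\rm arcsinh}\,t}=\sum_{n=0}^\infty\mathfrak C_{2n}\frac{t^{2n}}{(2n)!}$. Convolution notation: $(\mathfrak C_{2j_1}+\cdots+\mathfrak C_{2j_k})^n:=\sum_{i_1+\cdots+i_k=n,\ i_1,\dots,i_k\ge0}\frac{(2n)!}{(2i_1)!\cdots(2i_k)!}\mathfrak C_{2i_1+2j_1}\cdots\mathfrak C_{2i_k+2j_k}$ (here with $k=5$ summands, all $j_i=0$). *)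

theory Defs
  imports "HOL-Computational_Algebra.Formal_Power_Series"
begin

definition sinh_fps :: "real fps" where
  "sinh_fps = (fps_exp 1 - fps_exp (-1)) / fps_const 2"

definition arcsinh_fps :: "real fps" where
  "arcsinh_fps = fps_inv sinh_fps"

definition cauchy2_egf :: "real fps" where
  "cauchy2_egf = fps_X / arcsinh_fps"

text \<open>cauchy2 m is the Cauchy number with level 2, C_{2m}
  (t / arcsinh t = sum_m C_{2m} t^(2m) / (2m)!).\<close>
definition cauchy2 :: "nat \<Rightarrow> real" where
  "cauchy2 m = fact (2 * m) * fps_nth cauchy2_egf (2 * m)"

text \<open>Convolution (C_0 + ... + C_0)^n with k summands (all shifts j_i = 0).\<close>
definition cauchy2_conv :: "nat \<Rightarrow> nat \<Rightarrow> real" where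
  "cauchy2_conv k n =
     (\<Sum>i\<in>{i \<in> {..<k} \<rightarrow>\<^sub>E {..n}. sum i {..<k} = n}.
        fact (2 * n) / (\<Prod>r<k. fact (2 * i r)) * (\<Prod>r<k. cauchy2 (i r)))"

end

theory Submission
  imports Defs
begin

(* With g = arcsinh t, f = t / g and q = g', one has q^2 (1 + t^2) = 1 and q' = - t q^3, so every
   f^(j) g^(j+1) is a polynomial in t, g and q.  Eliminating g and q from the first four of these
   identities gives the linear differential equation
     24 f^5 = (24 + 20 t^2 + t^4) (f - t f') + (12 + 10 t^2 + t^4) t^2 f''
              - (4 + 2 t^2 - 2 t^4) t^3 f''' + (1 + t^2)^2 t^4 f'''',
   and comparing coefficients of t^(k+4) expresses [t^(k+4)] f^5 through the coefficients of f at
   k + 4, k + 2 and k.  As f is even, (2n)! [t^(2n)] f^5 is the five-fold convolution of the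
   numbers C_(2i), and k = 2n - 4 gives the theorem. *)

unbundle fps_syntax

lemma fps_deriv_mult_power_eq:
  fixes a g r :: "'a::comm_ring_1 fps"
  assumes "a * g ^ n = r"
  shows "fps_deriv a * g ^ Suc n = g * fps_deriv r - of_nat n * fps_deriv g * r"
proof -
  have "g * fps_deriv r = g * (a * (of_nat n * fps_deriv g * g ^ (n - 1)) + fps_deriv a * g ^ n)"
    by (simp flip: assms add: fps_deriv_power')
  also have "\<dots> = of_nat n * fps_deriv g * (a * g ^ n) + fps_deriv a * g ^ Suc n"
    by (cases n) (simp_all add: algebra_simps)
  finally show ?thesis
    by (simp add: assms)
qed

(* j' and n' are kept apart from Suc j and Suc n so that the rule also applies to numerals. *)
lemma fps_nth_deriv_Suc_mult_power_eq:
  fixes f g r :: "'a::comm_ring_1 fps"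
  assumes "fps_nth_deriv j f * g ^ n = r" and "Suc j = j'" and "Suc n = n'"
  shows "fps_nth_deriv j' f * g ^ n' = g * fps_deriv r - of_nat n * fps_deriv g * r"
  using fps_deriv_mult_power_eq[OF assms(1)] assms(2,3) by (auto simp only: fps_nth_deriv_commute)

lemma fps_nth_deriv_nth:
  "fps_nth_deriv j h $ k = pochhammer (of_nat k + 1) j * h $ (k + j)"
proof (induction j arbitrary: h)
  case (Suc j)
  then show ?case
    by (simp add: pochhammer_rec' algebra_simps)
qed simp

lemma fps_X_power_mult_nth_deriv_nth:
  "(fps_X ^ j * fps_nth_deriv j (h :: 'a::comm_ring_1 fps)) $ k = (\<Prod>r<j. of_nat k - of_nat r) * h $ k"
proof (cases "k < j")
  case True
  then have "(\<Prod>r<j. of_nat k - of_nat r :: 'a) = 0"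
    by (intro prod_zero bexI[of _ k]) auto
  with True show ?thesis
    by (simp add: fps_X_power_mult_nth)
next
  case False
  have "(\<Prod>r<j. of_nat (k - j) + 1 + of_nat r :: 'a) = (\<Prod>r<j. of_nat (k - j) + 1 + of_nat (j - Suc r))"
    by (rule prod.nat_diff_reindex[symmetric])
  also have "\<dots> = (\<Prod>r<j. of_nat k - of_nat r)"
    by (intro prod.cong) (use False in auto)
  finally show ?thesis
    using False by (simp add: fps_X_power_mult_nth fps_nth_deriv_nth pochhammer_prod atLeast0LessThan)
qed

lemma fps_nth_compose_X_squared:
  "(h oo fps_X ^ 2) $ m = (if even m then h $ (m div 2) else 0)"
proof -
  have "(h oo fps_X ^ 2) $ m = (\<Sum>i=0..m. if i = m div 2 \<and> even m then h $ i else 0)"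
    unfolding fps_compose_nth power_mult[symmetric] by (intro sum.cong) auto
  then show ?thesis
    by simp
qed

lemma fps_power_nth_double:
  fixes h :: "'a::idom fps"
  assumes "\<And>m. odd m \<Longrightarrow> h $ m = 0"
  shows "(h ^ k) $ (2 * n) = (Abs_fps (\<lambda>j. h $ (2 * j)) ^ k) $ n"
proof -
  have "h = Abs_fps (\<lambda>j. h $ (2 * j)) oo fps_X ^ 2"
    by (auto simp: fps_eq_iff fps_nth_compose_X_squared assms)
  then have "h ^ k = Abs_fps (\<lambda>j. h $ (2 * j)) ^ k oo fps_X ^ 2"
    by (metis fps_compose_power fps_X_power_nth zero_neq_numeral)
  then show ?thesis
    by (simp add: fps_nth_compose_X_squared)
qed

lemma fps_power_nth_PiE:
  fixes h :: "'a::comm_ring_1 fps"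
  shows "(h ^ k) $ n = (\<Sum>i\<in>{i \<in> {..<k} \<rightarrow>\<^sub>E {..n}. sum i {..<k} = n}. \<Prod>r<k. h $ (i r))"
proof (cases k)
  case 0
  then show ?thesis
    by (cases n) auto
next
  case (Suc k)
  have "(h ^ Suc k) $ n = (\<Sum>v\<in>natpermute n (k + 1). \<Prod>j\<in>{0..k}. h $ (v ! j))"
    by (rule fps_power_nth_Suc)
  also have "\<dots> = (\<Sum>i\<in>{i \<in> {..<Suc k} \<rightarrow>\<^sub>E {..n}. sum i {..<Suc k} = n}. \<Prod>r<Suc k. h $ (i r))"
  proof (rule sum.reindex_bij_witness[where i = "\<lambda>i. map i [0..<Suc k]"
        and j = "\<lambda>v. restrict (\<lambda>r. v ! r) {..<Suc k}"])
    fix v assume "v \<in> natpermute n (k + 1)"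
    then have len: "length v = Suc k" and sum: "sum_list v = n"
      by (auto simp: natpermute_def)
    show "map (restrict (\<lambda>r. v ! r) {..<Suc k}) [0..<Suc k] = v"
      by (rule nth_equalityI) (auto simp: len simp del: upt_Suc)
    have "v ! r \<le> n" if "r < Suc k" for r
      using elem_le_sum_list[of r v] that len sum by simp
    moreover have "(\<Sum>r<Suc k. v ! r) = n"
      using sum len by (simp add: sum_list_sum_nth atLeast0LessThan)
    ultimately show "restrict (\<lambda>r. v ! r) {..<Suc k} \<in> {i \<in> {..<Suc k} \<rightarrow>\<^sub>E {..n}. sum i {..<Suc k} = n}"
      by (simp add: PiE_iff)
    show "(\<Prod>r<Suc k. h $ restrict (\<lambda>r. v ! r) {..<Suc k} r) = (\<Prod>j\<in>{0..k}. h $ (v ! j))"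
      by (simp add: atLeast0AtMost lessThan_Suc_atMost)
  next
    fix i assume i: "i \<in> {i \<in> {..<Suc k} \<rightarrow>\<^sub>E {..n}. sum i {..<Suc k} = n}"
    then show "restrict (\<lambda>r. map i [0..<Suc k] ! r) {..<Suc k} = i"
      by (auto simp: PiE_iff extensional_def simp del: upt_Suc)
    have "sum_list (map i [0..<Suc k]) = sum i {..<Suc k}"
      by (simp only: sum_set_upt_conv_sum_list_nat[symmetric] atLeast0LessThan set_upt)
    with i show "map i [0..<Suc k] \<in> natpermute n (k + 1)"
      by (simp add: natpermute_def del: upt_Suc)
  qed
  finally show ?thesis
    using Suc by simp
qed

lemma fps_inv_compose_uminus_X:
  fixes a :: "'a::field fps"
  assumes a0: "a $ 0 = 0" and a1: "a $ 1 \<noteq> 0" and odd: "a oo - fps_X = - a"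
  shows "fps_inv a oo - fps_X = - fps_inv a"
proof -
  define b where "b = fps_inv a oo - fps_X"
  have b0: "b $ 0 = 0" and negX0: "(- fps_X :: 'a fps) $ 0 = 0"
    by (simp_all add: b_def fps_inv_def)
  have "- fps_X oo b = - b"
    using b0 by (simp add: fps_compose_uminus)
  then have "a oo - b = (a oo - fps_X) oo b"
    using fps_compose_assoc[OF b0 negX0, of a] by simp
  also have "\<dots> = - (a oo b)"
    by (simp add: odd fps_compose_uminus)
  also have "a oo b = (a oo fps_inv a) oo - fps_X"
    unfolding b_def by (rule fps_compose_assoc[OF negX0]) (simp add: fps_inv_def)
  also have "\<dots> = - fps_X"
    by (simp add: fps_inv_right[OF a0 a1])
  finally have "a oo - b = fps_X"
    by simp
  then have "fps_inv a oo (a oo - b) = fps_inv a oo fps_X"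
    by simp
  then have "- b = fps_inv a"
    using b0 by (simp add: fps_compose_assoc a0 fps_inv[OF a0 a1])
  then show ?thesis
    unfolding b_def by (metis minus_minus)
qed

lemma real_binomial_eq_prod: "real (n choose k) = (\<Prod>i<k. real n - real i) / fact k"
  by (simp add: binomial_gbinomial gbinomial_prod_rev atLeast0LessThan)

definition cosh_fps :: "real fps" where
  "cosh_fps = (fps_exp 1 + fps_exp (-1)) / fps_const 2"

lemma fps_nth_sinh: "sinh_fps $ n = (if odd n then 1 / fact n else 0)"
  by (auto simp add: sinh_fps_def fps_divide_unit fps_const_inverse)

lemma fps_deriv_sinh: "fps_deriv sinh_fps = cosh_fps"
  by (simp add: sinh_fps_def cosh_fps_def fps_divide_unit fps_const_neg[symmetric] del: fps_const_neg)

lemma fps_deriv_cosh: "fps_deriv cosh_fps = sinh_fps"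
  by (simp add: sinh_fps_def cosh_fps_def fps_divide_unit algebra_simps fps_const_neg[symmetric] del: fps_const_neg)

lemma cosh_fps_squared: "cosh_fps ^ 2 = 1 + sinh_fps ^ 2"
proof -
  have "fps_exp (1::real) * fps_exp (-1) = 1"
    by (simp flip: fps_exp_add_mult)
  moreover have "4 * (fps_const (1/2) * fps_const (1/2) :: real fps) = 1"
    by (simp add: numeral_fps_const)
  ultimately show ?thesis
    by (simp add: sinh_fps_def cosh_fps_def fps_divide_unit fps_const_inverse power2_eq_square algebra_simps)
qed

lemma sinh_fps_compose_uminus_X: "sinh_fps oo - fps_X = - sinh_fps"
  by (auto simp: fps_eq_iff fps_compose_uminus' fps_nth_sinh)

lemma arcsinh_fps_nth_0: "arcsinh_fps $ 0 = 0"
  by (simp add: arcsinh_fps_def fps_inv_def)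

lemma arcsinh_fps_nth_1: "arcsinh_fps $ 1 = 1"
  by (simp add: arcsinh_fps_def fps_inv_def fps_nth_sinh)

lemma sinh_compose_arcsinh: "sinh_fps oo arcsinh_fps = fps_X"
  unfolding arcsinh_fps_def by (rule fps_inv_right) (simp_all add: fps_nth_sinh)

lemma arcsinh_fps_compose_uminus_X: "arcsinh_fps oo - fps_X = - arcsinh_fps"
  unfolding arcsinh_fps_def
  by (rule fps_inv_compose_uminus_X) (simp_all add: fps_nth_sinh sinh_fps_compose_uminus_X)

lemma cosh_compose_arcsinh_mult_deriv: "(cosh_fps oo arcsinh_fps) * fps_deriv arcsinh_fps = 1"
  using fps_compose_deriv[OF arcsinh_fps_nth_0, of sinh_fps]
  by (simp add: fps_deriv_sinh sinh_compose_arcsinh)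

lemma fps_deriv_arcsinh_squared: "(fps_deriv arcsinh_fps) ^ 2 * (1 + fps_X ^ 2) = 1"
proof -
  have "(cosh_fps oo arcsinh_fps) ^ 2 = 1 + fps_X ^ 2"
    by (simp add: fps_compose_power[OF arcsinh_fps_nth_0] cosh_fps_squared fps_compose_add_distrib
        flip: sinh_compose_arcsinh)
  then show ?thesis
    using cosh_compose_arcsinh_mult_deriv by (metis power_mult_distrib mult.commute power_one)
qed

lemma fps_deriv_deriv_arcsinh:
  "fps_deriv (fps_deriv arcsinh_fps) = - fps_X * (fps_deriv arcsinh_fps) ^ 3"
proof -
  define c where "c = cosh_fps oo arcsinh_fps"
  define q where "q = fps_deriv arcsinh_fps"
  have cq: "c * q = 1"
    using cosh_compose_arcsinh_mult_deriv by (simp add: c_def q_def)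
  have "fps_deriv c = fps_X * q"
    using fps_compose_deriv[OF arcsinh_fps_nth_0, of cosh_fps]
    by (simp add: c_def q_def fps_deriv_cosh sinh_compose_arcsinh)
  then have "fps_X * q * q + c * fps_deriv q = 0"
    using arg_cong[OF cq, of fps_deriv] by (simp add: algebra_simps)
  then have "fps_X * q ^ 3 + (c * q) * fps_deriv q = 0"
    by (metis (no_types) mult_zero_right distrib_left power3_eq_cube mult.assoc mult.commute mult.left_commute)
  then have "fps_deriv q + fps_X * q ^ 3 = 0"
    by (simp only: cq mult_1_left add.commute)
  then show ?thesis
    by (simp add: q_def eq_neg_iff_add_eq_0)
qed

lemma cauchy2_egf_mult_arcsinh: "cauchy2_egf * arcsinh_fps = fps_X"
  unfolding cauchy2_egf_def
  by (rule fps_times_divide_eq) (use subdegree_leI[of arcsinh_fps 1] arcsinh_fps_nth_1 in auto)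

lemma cauchy2_egf_nth_odd:
  assumes "odd m"
  shows "cauchy2_egf $ m = 0"
proof -
  have negX0: "(- fps_X :: real fps) $ 0 = 0"
    by simp
  have "(cauchy2_egf oo - fps_X) * arcsinh_fps = cauchy2_egf * arcsinh_fps"
    using fps_compose_mult_distrib[OF negX0, of cauchy2_egf arcsinh_fps]
    by (simp add: cauchy2_egf_mult_arcsinh arcsinh_fps_compose_uminus_X)
  then have "cauchy2_egf oo - fps_X = cauchy2_egf"
    using arcsinh_fps_nth_1 by (metis mult_right_cancel fps_zero_nth zero_neq_one)
  then have "(-1) ^ m * cauchy2_egf $ m = cauchy2_egf $ m"
    by (metis fps_compose_uminus' fps_nth_Abs_fps)
  with assms show ?thesis
    by simp
qed

lemma cauchy2_egf_nth_deriv_mult_arcsinh_power: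
  defines "f \<equiv> cauchy2_egf" and "g \<equiv> arcsinh_fps" and "q \<equiv> fps_deriv arcsinh_fps"
    and "X \<equiv> fps_X :: real fps"
  shows "fps_nth_deriv 1 f * g ^ 2 = g - X * q"
    and "fps_nth_deriv 2 f * g ^ 3 = X^2 * g * q^3 + 2 * X * q^2 - 2 * g * q"
    and "fps_nth_deriv 3 f * g ^ 4 = - 3 * X^3 * g^2 * q^5 - 6 * X^2 * g * q^4 + 4 * X * g^2 * q^3
      - 6 * X * q^3 + 6 * g * q^2"
    and "fps_nth_deriv 4 f * g ^ 5 = 15 * X^4 * g^3 * q^7 + 30 * X^3 * g^2 * q^6 - 21 * X^2 * g^3 * q^5
      + 36 * X^2 * g * q^5 - 32 * X * g^2 * q^4 + 24 * X * q^4 + 4 * g^3 * q^3 - 24 * g * q^3"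
proof -
  have D: "fps_deriv g = q" "fps_deriv q = - X * q^3" "fps_deriv X = 1"
    by (simp_all add: g_def q_def X_def fps_deriv_deriv_arcsinh)
  have "fps_nth_deriv 0 f * g ^ 1 = X"
    by (simp add: f_def g_def X_def cauchy2_egf_mult_arcsinh)
  then have "fps_nth_deriv 1 f * g ^ 2 = g * fps_deriv X - of_nat 1 * fps_deriv g * X"
    by (rule fps_nth_deriv_Suc_mult_power_eq) simp_all
  also have "\<dots> = g - X * q"
    by (simp add: D)
  finally show d1: "fps_nth_deriv 1 f * g ^ 2 = g - X * q" .
  then have "fps_nth_deriv 2 f * g ^ 3 = g * fps_deriv (g - X * q) - of_nat 2 * fps_deriv g * (g - X * q)"
    by (rule fps_nth_deriv_Suc_mult_power_eq) simp_all
  also have "\<dots> = X^2 * g * q^3 + 2 * X * q^2 - 2 * g * q"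
    by (simp add: D) algebra
  finally show d2: "fps_nth_deriv 2 f * g ^ 3 = X^2 * g * q^3 + 2 * X * q^2 - 2 * g * q" .
  then have "fps_nth_deriv 3 f * g ^ 4 = g * fps_deriv (X^2 * g * q^3 + 2 * X * q^2 - 2 * g * q)
      - of_nat 3 * fps_deriv g * (X^2 * g * q^3 + 2 * X * q^2 - 2 * g * q)"
    by (rule fps_nth_deriv_Suc_mult_power_eq) simp_all
  also have "\<dots> = - 3 * X^3 * g^2 * q^5 - 6 * X^2 * g * q^4 + 4 * X * g^2 * q^3 - 6 * X * q^3 + 6 * g * q^2"
    by (simp add: D fps_deriv_power') algebra
  finally show d3: "fps_nth_deriv 3 f * g ^ 4 = - 3 * X^3 * g^2 * q^5 - 6 * X^2 * g * q^4
      + 4 * X * g^2 * q^3 - 6 * X * q^3 + 6 * g * q^2" .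
  then have "fps_nth_deriv 4 f * g ^ 5 = g * fps_deriv (- 3 * X^3 * g^2 * q^5 - 6 * X^2 * g * q^4
      + 4 * X * g^2 * q^3 - 6 * X * q^3 + 6 * g * q^2) - of_nat 4 * fps_deriv g * (- 3 * X^3 * g^2 * q^5
      - 6 * X^2 * g * q^4 + 4 * X * g^2 * q^3 - 6 * X * q^3 + 6 * g * q^2)"
    by (rule fps_nth_deriv_Suc_mult_power_eq) simp_all
  also have "\<dots> = 15 * X^4 * g^3 * q^7 + 30 * X^3 * g^2 * q^6 - 21 * X^2 * g^3 * q^5
      + 36 * X^2 * g * q^5 - 32 * X * g^2 * q^4 + 24 * X * q^4 + 4 * g^3 * q^3 - 24 * g * q^3"
    by (simp add: D fps_deriv_power') algebra
  finally show "fps_nth_deriv 4 f * g ^ 5 = 15 * X^4 * g^3 * q^7 + 30 * X^3 * g^2 * q^6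
      - 21 * X^2 * g^3 * q^5 + 36 * X^2 * g * q^5 - 32 * X * g^2 * q^4 + 24 * X * q^4
      + 4 * g^3 * q^3 - 24 * g * q^3" .
qed

lemma cauchy2_egf_ode:
  defines "f \<equiv> cauchy2_egf" and "X \<equiv> fps_X :: real fps"
  shows "24 * f ^ 5 = (24 + 20 * X^2 + X^4) * (f - X * fps_nth_deriv 1 f)
    + (12 + 10 * X^2 + X^4) * (X^2 * fps_nth_deriv 2 f)
    - (4 + 2 * X^2 - 2 * X^4) * (X^3 * fps_nth_deriv 3 f)
    + (1 + 2 * X^2 + X^4) * (X^4 * fps_nth_deriv 4 f)" (is "_ = ?rhs")
proof -
  define g where "g = arcsinh_fps"
  define q where "q = fps_deriv arcsinh_fps"
  note D = cauchy2_egf_nth_deriv_mult_arcsinh_power[folded f_def g_def q_def X_def]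
  have fg: "f * g = X"
    by (simp add: f_def g_def X_def cauchy2_egf_mult_arcsinh)
  have rel: "q^2 * (1 + X^2) = 1"
    by (simp add: q_def X_def fps_deriv_arcsinh_squared)
  have "g^5 * ?rhs = (24 + 20 * X^2 + X^4) * (g^4 * (f * g) - X * g^3 * (fps_nth_deriv 1 f * g^2))
    + (12 + 10 * X^2 + X^4) * X^2 * g^2 * (fps_nth_deriv 2 f * g^3)
    - (4 + 2 * X^2 - 2 * X^4) * X^3 * g * (fps_nth_deriv 3 f * g^4)
    + (1 + 2 * X^2 + X^4) * X^4 * (fps_nth_deriv 4 f * g^5)"
    by algebra
  \<comment> \<open>the long factor is the quotient of the left-hand side minus 24 X^5 by q^2 (1 + X^2) - 1\<close>
  also have "\<dots> = 24 * X^5 + (q^2 * (1 + X^2) - 1) * (15 * X^10 * g^3 * q^5 + 30 * X^9 * g^2 * q^4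
    + 15 * X^8 * g^3 * q^5 - 12 * X^8 * g^3 * q^3 + 36 * X^8 * g * q^3 + 30 * X^7 * g^2 * q^4
    - 14 * X^7 * g^2 * q^2 + 24 * X^7 * q^2 - 9 * X^6 * g^3 * q^3 + X^6 * g^3 * q + 36 * X^6 * g * q^3
    - 8 * X^5 * g^2 * q^2 + 24 * X^5 * q^2 + 24 * X^5)"
    unfolding fg D by algebra
  also have "\<dots> = g^5 * (24 * f^5)"
    by (simp add: rel) (simp add: power_mult_distrib mult.commute flip: fg)
  finally have "g^5 * (24 * f^5) = g^5 * ?rhs" ..
  moreover have "g \<noteq> 0"
    using arcsinh_fps_nth_1 by (auto simp: g_def)
  ultimately show ?thesis
    by simp
qed

lemma cauchy2_egf_power5_nth:
  fixes k :: nat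
  defines "f \<equiv> cauchy2_egf" and "x \<equiv> real k"
  shows "24 * (f ^ 5) $ (k + 4) = x * (x + 1) * (x + 2) * (x + 3) * f $ (k + 4)
    + 2 * x * (x + 1) * (x^2 + 1) * f $ (k + 2) + (x - 1)^4 * f $ k"
proof -
  define E where "E j = fps_X ^ j * fps_nth_deriv j f" for j
  have E: "E j $ m = (\<Prod>r<j. real m - real r) * f $ m" for j m
    unfolding E_def by (rule fps_X_power_mult_nth_deriv_nth)
  have "fps_X * fps_nth_deriv 1 f = E 1"
    by (simp add: E_def)
  then have "24 * (f ^ 5) $ (k + 4) = ((24 + 20 * fps_X^2 + fps_X^4) * (f - E 1)
    + (12 + 10 * fps_X^2 + fps_X^4) * E 2 - (4 + 2 * fps_X^2 - 2 * fps_X^4) * E 3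
    + (1 + 2 * fps_X^2 + fps_X^4) * E 4) $ (k + 4)"
    using arg_cong[OF cauchy2_egf_ode, of "\<lambda>h. h $ (k + 4)"]
    by (simp add: f_def E_def numeral_fps_const)
  also have "\<dots> = x * (x + 1) * (x + 2) * (x + 3) * f $ (k + 4)
    + 2 * x * (x + 1) * (x^2 + 1) * f $ (k + 2) + (x - 1)^4 * f $ k"
    by (simp add: distrib_right left_diff_distrib numeral_fps_const mult.assoc fps_X_power_mult_nth
        E lessThan_Suc eval_nat_numeral x_def) algebra
  finally show ?thesis .
qed

lemma cauchy2_conv_eq_fact_mult_power_nth:
  "cauchy2_conv k n = fact (2 * n) * (cauchy2_egf ^ k) $ (2 * n)"
proof -
  define F where "F = Abs_fps (\<lambda>j. cauchy2_egf $ (2 * j))"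
  have "cauchy2_conv k n
      = fact (2 * n) * (\<Sum>i\<in>{i \<in> {..<k} \<rightarrow>\<^sub>E {..n}. sum i {..<k} = n}. \<Prod>r<k. F $ (i r))"
    unfolding cauchy2_conv_def sum_distrib_left
    by (intro sum.cong) (simp_all add: F_def cauchy2_def prod.distrib)
  also have "\<dots> = fact (2 * n) * (F ^ k) $ n"
    by (simp only: fps_power_nth_PiE)
  also have "(F ^ k) $ n = (cauchy2_egf ^ k) $ (2 * n)"
    unfolding F_def by (rule fps_power_nth_double[symmetric]) (rule cauchy2_egf_nth_odd)
  finally show ?thesis .
qed

theorem mainTheorem8:
  fixes n :: nat
  assumes "n \<ge> 2"
  shows "cauchy2_conv 5 n =
    real ((2 * n - 1) choose 4) * cauchy2 n
    + (4 * real n ^ 2 - 16 * real n + 17) / 3 * real ((2 * n) choose 2)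
        * real ((2 * n - 3) choose 2) * cauchy2 (n - 1)
    + real ((2 * n) choose 4) * (2 * real n - 5) ^ 4 * cauchy2 (n - 2)"
proof -
  obtain j where n: "n = j + 2"
    using assms le_Suc_ex by (metis add.commute)
  define x where "x = real j"
  have idx: "2 * n = 2 * j + 4" "2 * (n - 1) = 2 * j + 2" "2 * (n - 2) = 2 * j"
    by (simp_all add: n)
  have fact_j: "fact (2 * j + 4) = (2 * x + 4) * (2 * x + 3) * (2 * x + 2) * (2 * x + 1) * fact (2 * j)"
    "fact (2 * j + 2) = (2 * x + 2) * (2 * x + 1) * fact (2 * j)"
    by (simp_all add: x_def eval_nat_numeral algebra_simps)
  have C: "cauchy2 n = fact (2 * j + 4) * cauchy2_egf $ (2 * j + 4)"
    "cauchy2 (n - 1) = fact (2 * j + 2) * cauchy2_egf $ (2 * j + 2)"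
    "cauchy2 (n - 2) = fact (2 * j) * cauchy2_egf $ (2 * j)"
    by (simp_all only: cauchy2_def idx)
  have conv: "cauchy2_conv 5 n = fact (2 * j + 4) * (cauchy2_egf ^ 5) $ (2 * j + 4)"
    by (simp add: cauchy2_conv_eq_fact_mult_power_nth idx)
  show ?thesis
    using cauchy2_egf_power5_nth[of "2 * j", folded x_def]
    unfolding conv C fact_j real_binomial_eq_prod
    by (simp add: n x_def lessThan_Suc eval_nat_numeral) algebra
qed

end
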